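(* Let $p_1,\dots,p_n$ be distinct primes with $p_i\equiv 5\pmod 8$ for all $i$, let $D=p_1\cdots p_n$, and let \[\mathcal{G}=\{a\in\mathbb{Z}: 1\leq a\leq D,\ \left(\tfrac{p_i}{a}\right)=1\text{ for all }1\leq i\leq n\}.\] Then $\mathfrak{s}_1=\sum_{a\in\mathcal{G}}a^2$ satisfies $\mathfrak{s}_1\equiv 2^{n-1}\mathfrak{t}\pmod 4$ for some odd integer $\mathfrak{t}$. In particular, if $n\geq 3$ then $4\mid\mathfrak{s}_1$.
   Context: $\left(\frac{p}{a}\right)$ denotes the Kronecker–Jacobi symbol. *)

theory Defs
  imports "HOL-Number_Theory.Number_Theory"
begin

definition kronecker2 :: "int \<Rightarrow> int" where
  "kronecker2 a = (if even a then 0 else if a mod 8 = 1 \<or> a mod 8 = 7 then 1 else -1)"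

definition kronecker :: "int \<Rightarrow> nat \<Rightarrow> int" where
  "kronecker a n = (\<Prod>p\<in>prime_factors n.
      (if p = 2 then kronecker2 a else Legendre a (int p)) ^ multiplicity p n)"

end

theory Submission
  imports Defs
begin

text \<open>Modulo 4 a square is 1 or 0 according to the parity of its root, so \<open>s1\<close> is congruent
  to the number of odd elements of \<open>G\<close>. Since every \<open>p\<^sub>i \<equiv> 1 (mod 4)\<close>, reciprocity turns
  \<open>(p\<^sub>i/a)\<close> into \<open>(a/p\<^sub>i)\<close> for odd \<open>a\<close>; hence the odd elements of \<open>G\<close> are the odd
  \<open>a \<le> D\<close> that are quadratic residues modulo every \<open>p\<^sub>i\<close>. By the Chinese remainder theorem
  there are \<open>\<Prod>(p\<^sub>i - 1)/2 = 2\<^sup>n t\<close> such residues, with \<open>t = \<Prod>(p\<^sub>i - 1)/4\<close> odd because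
  \<open>p\<^sub>i \<equiv> 5 (mod 8)\<close>. As \<open>-1\<close> is a square modulo each \<open>p\<^sub>i\<close> and \<open>D\<close> is odd, \<open>a \<mapsto> D - a\<close>
  permutes them and swaps parity, so exactly \<open>2\<^bsup>n-1\<^esup> t\<close> of them are odd.\<close>

lemma cong_imp_eq_if_abs_le_one:
  fixes x y p :: int
  assumes "[x = y] (mod p)" "\<bar>x\<bar> \<le> 1" "\<bar>y\<bar> \<le> 1" "2 < p"
  shows "x = y"
proof -
  have "[x + 1 = y + 1] (mod p)" using assms(1) by (rule cong_add) simp
  moreover have "0 \<le> x + 1" "x + 1 < p" "0 \<le> y + 1" "y + 1 < p" using assms(2-4) by auto
  ultimately have "x + 1 = y + 1" using cong_less_imp_eq_int by blast
  then show ?thesis by simp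
qed

lemma Legendre_abs_le_one: "\<bar>Legendre a p\<bar> \<le> 1"
  by (simp add: Legendre_def)

lemma Legendre_eq_1_iff:
  "Legendre a p = 1 \<longleftrightarrow> \<not> p dvd a \<and> (\<exists>x. [x ^ 2 = a] (mod p))"
  by (simp add: Legendre_def QuadRes_def cong_0_iff)

lemma Legendre_eqI:
  assumes "prime p" "2 < p" "[c = a ^ ((p - 1) div 2)] (mod int p)" "\<bar>c\<bar> \<le> 1"
  shows "Legendre a (int p) = c"
proof (rule cong_imp_eq_if_abs_le_one)
  show "[Legendre a (int p) = c] (mod int p)"
    using euler_criterion[OF assms(1,2)] cong_sym[OF assms(3)] by (rule cong_trans)
qed (use assms(2,4) Legendre_abs_le_one in auto)

lemma Legendre_mult:
  assumes "prime p" "2 < p"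
  shows "Legendre (a * b) (int p) = Legendre a (int p) * Legendre b (int p)"
proof (rule Legendre_eqI[OF assms])
  show "[Legendre a (int p) * Legendre b (int p) = (a * b) ^ ((p - 1) div 2)] (mod int p)"
    unfolding power_mult_distrib
    using euler_criterion[OF assms, of a] euler_criterion[OF assms, of b] by (rule cong_mult)
  show "\<bar>Legendre a (int p) * Legendre b (int p)\<bar> \<le> 1"
    unfolding abs_mult by (intro mult_le_one Legendre_abs_le_one) auto
qed

lemma Legendre_one:
  assumes "prime p" "2 < p"
  shows "Legendre 1 (int p) = 1"
  by (rule Legendre_eqI[OF assms]) simp_all

lemma Legendre_power:
  assumes "prime p" "2 < p"
  shows "Legendre (a ^ k) (int p) = Legendre a (int p) ^ k"
proof (rule Legendre_eqI[OF assms])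
  have "(a ^ k) ^ ((p - 1) div 2) = (a ^ ((p - 1) div 2)) ^ k"
    by (simp add: power_mult[symmetric] mult.commute)
  then show "[Legendre a (int p) ^ k = (a ^ k) ^ ((p - 1) div 2)] (mod int p)"
    using euler_criterion[OF assms, THEN cong_pow] by simp
  show "\<bar>Legendre a (int p) ^ k\<bar> \<le> 1"
    unfolding power_abs by (intro power_le_one Legendre_abs_le_one) auto
qed

lemma Legendre_prod:
  assumes "prime p" "2 < p"
  shows "Legendre (\<Prod>i\<in>A. f i) (int p) = (\<Prod>i\<in>A. Legendre (f i) (int p))"
  by (induction A rule: infinite_finite_induct) (auto simp: Legendre_mult Legendre_one assms)

lemma Legendre_cong:
  assumes "[a = b] (mod p)"
  shows "Legendre a p = Legendre b p"
proof -
  have "[a = 0] (mod p) \<longleftrightarrow> [b = 0] (mod p)" "QuadRes p a \<longleftrightarrow> QuadRes p b"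
    using assms unfolding QuadRes_def by (meson cong_sym cong_trans)+
  then show ?thesis by (simp add: Legendre_def)
qed

lemma Legendre_mod_dvd:
  assumes "q dvd m"
  shows "Legendre (int (x mod m)) (int q) = Legendre (int x) (int q)"
proof (rule Legendre_cong)
  have "[x mod m = x] (mod q)" by (rule cong_dvd_modulus_nat[OF _ assms]) (simp add: cong_def)
  then show "[int (x mod m) = int x] (mod int q)" by (simp only: cong_int_iff)
qed

lemma Legendre_minus_one:
  assumes "prime p" "p mod 4 = 1"
  shows "Legendre (-1) (int p) = 1"
proof -
  have "2 < p" "even ((p - 1) div 2)" using assms prime_gt_1_nat[OF assms(1)] by presburger+
  then show ?thesis by (intro Legendre_eqI[OF assms(1)]) auto
qed

lemma Legendre_swap:
  assumes "prime p" "p mod 4 = 1" "prime q" "2 < q"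
  shows "Legendre (int p) (int q) = Legendre (int q) (int p)"
proof (cases "p = q")
  case False
  have "2 < p" "even ((p - 1) div 2)" using assms prime_gt_1_nat[OF assms(1)] by presburger+
  then have "Legendre (int p) (int q) * Legendre (int q) (int p) = 1"
    using Quadratic_Reciprocity[of p q] assms False by auto
  then show ?thesis
    using Legendre_abs_le_one[of "int p" "int q"] Legendre_abs_le_one[of "int q" "int p"]
    by (auto simp: abs_le_iff zmult_eq_1_iff)
qed simp

lemma kronecker_eq_Legendre:
  assumes "prime p" "p mod 4 = 1" "odd m"
  shows "kronecker (int p) m = Legendre (int m) (int p)"
proof -
  have p: "2 < p" using assms(1,2) prime_gt_1_nat[OF assms(1)] by presburger
  have "kronecker (int p) m = (\<Prod>q\<in>prime_factors m. Legendre (int q) (int p) ^ multiplicity q m)"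
    unfolding kronecker_def
  proof (intro prod.cong refl)
    fix q assume "q \<in> prime_factors m"
    then have "prime q" "q \<noteq> 2" using assms(3) by auto
    then have "2 < q" using prime_ge_2_nat[of q] by linarith
    then show "(if q = 2 then kronecker2 (int p) else Legendre (int p) (int q)) ^ multiplicity q m
        = Legendre (int q) (int p) ^ multiplicity q m"
      using Legendre_swap[OF assms(1,2) \<open>prime q\<close>] by simp
  qed
  also have "\<dots> = Legendre (\<Prod>q\<in>prime_factors m. int q ^ multiplicity q m) (int p)"
    by (simp add: Legendre_prod[OF assms(1) p] Legendre_power[OF assms(1) p])
  also have "(\<Prod>q\<in>prime_factors m. int q ^ multiplicity q m) = int m"
  proof -
    have "int (\<Prod>q\<in>prime_factors m. q ^ multiplicity q m) = int m"
      using prime_factorization_nat[of m] assms(3) odd_pos by metis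
    then show ?thesis by (simp add: of_nat_prod)
  qed
  finally show ?thesis .
qed

lemma cong_square_imp_eq_half_range:
  fixes x y p :: nat
  assumes "prime p" "[x ^ 2 = y ^ 2] (mod p)" "2 * x < p" "2 * y < p"
  shows "x = y"
proof -
  have "[int x ^ 2 = int y ^ 2] (mod int p)"
    using assms(2) by (metis cong_int_iff of_nat_power)
  then have "int p dvd (int x - int y) * (int x + int y)"
    by (simp add: cong_iff_dvd_diff power2_eq_square algebra_simps)
  then have "int p dvd int x - int y \<or> int p dvd int (x + y)"
    using assms(1) prime_dvd_multD[of "int p"] by simp
  then have "[x = y] (mod p) \<or> p dvd x + y"
    by (metis cong_iff_dvd_diff cong_int_iff of_nat_dvd_iff)
  then show ?thesis
    using assms(3,4) cong_less_modulus_unique_nat[of x y p] nat_dvd_not_less[of "x + y" p] by linarith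
qed

lemma cong_square_half_range:
  fixes p :: nat and z :: int
  assumes "odd p"
  obtains x where "2 * x < p" "[int x ^ 2 = z ^ 2] (mod int p)"
proof -
  define w where "w = nat (z mod int p)"
  have "0 < p" using assms by (rule odd_pos)
  then have w: "[int w = z] (mod int p)" "w < p"
    unfolding w_def by (auto simp: cong_def nat_less_iff)
  show ?thesis
  proof (cases "2 * w < p")
    case True
    then show ?thesis using cong_pow[OF w(1)] by (intro that)
  next
    case False
    have "int p dvd int p - (int w - z)"
      using w(1) by (simp add: cong_iff_dvd_diff dvd_diff)
    also have "int p - (int w - z) = int (p - w) - (- z)"
      using w(2) by (simp add: of_nat_diff)
    finally have "[int (p - w) = - z] (mod int p)" by (simp only: cong_iff_dvd_diff)
    from cong_pow[OF this, of 2] have "[int (p - w) ^ 2 = z ^ 2] (mod int p)" by simp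
    moreover have "2 * (p - w) < p" using False assms by presburger
    ultimately show ?thesis by (intro that)
  qed
qed

lemma card_quadratic_residues:
  assumes "prime p" "2 < p"
  shows "card {x \<in> totatives p. Legendre (int x) (int p) = 1} = (p - 1) div 2"
proof -
  define h where "h = (p - 1) div 2"
  define R where "R = {x \<in> totatives p. Legendre (int x) (int p) = 1}"
  have odd: "odd p" using assms by (simp add: prime_odd_nat)
  have "2 * h < p" unfolding h_def using odd by presburger
  then have half: "2 * x < p" if "x \<in> {1..h}" for x using that by simp
  have R: "y \<in> R \<longleftrightarrow> 0 < y \<and> y < p \<and> \<not> int p dvd int y \<and> (\<exists>z. [z ^ 2 = int y] (mod int p))"
    for y
    unfolding R_def totatives_prime[OF assms(1)] Legendre_eq_1_iff by auto
  have "bij_betw (\<lambda>x. x ^ 2 mod p) {1..h} R"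
  proof (rule bij_betw_imageI)
    show "inj_on (\<lambda>x. x ^ 2 mod p) {1..h}"
    proof (rule inj_onI)
      fix x y assume "x \<in> {1..h}" "y \<in> {1..h}" "x ^ 2 mod p = y ^ 2 mod p"
      moreover have "2 * x < p" "2 * y < p" using calculation(1,2) by (simp_all add: half)
      ultimately show "x = y"
        using cong_square_imp_eq_half_range[OF assms(1), of x y] unfolding cong_def by blast
    qed
  next
    show "(\<lambda>x. x ^ 2 mod p) ` {1..h} = R"
    proof safe
      fix x :: nat assume x: "x \<in> {1..h}"
      then have "0 < x" "x < p" using half[OF x] by auto
      then have "\<not> p dvd x ^ 2" by (auto simp: prime_dvd_power_iff assms(1) dest: dvd_imp_le)
      then have "0 < x ^ 2 mod p" "\<not> int p dvd int (x ^ 2 mod p)"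
        by (simp_all add: mod_greater_zero_iff_not_dvd dvd_mod_iff)
      moreover have "[x ^ 2 = x ^ 2 mod p] (mod p)" by (simp add: cong_def)
      then have "[int (x ^ 2) = int (x ^ 2 mod p)] (mod int p)" by (simp only: cong_int_iff)
      moreover have "x ^ 2 mod p < p" using \<open>x < p\<close> by simp
      ultimately show "x ^ 2 mod p \<in> R" unfolding R of_nat_power by blast
    next
      fix y assume "y \<in> R"
      then have y: "0 < y" "y < p" "\<exists>z. [z ^ 2 = int y] (mod int p)"
        unfolding R by auto
      then obtain z where z: "[z ^ 2 = int y] (mod int p)" by blast
      obtain x where x: "2 * x < p" "[int x ^ 2 = z ^ 2] (mod int p)"
        using cong_square_half_range[OF odd] .
      have "[int (x ^ 2) = int y] (mod int p)" using cong_trans[OF x(2) z] by simp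
      then have "[x ^ 2 = y] (mod p)" by (simp only: cong_int_iff)
      then have "x ^ 2 mod p = y" using y(2) by (simp add: cong_def)
      moreover have "x \<noteq> 0" using y(1) calculation by (cases "x = 0") auto
      ultimately show "y \<in> (\<lambda>x. x ^ 2 mod p) ` {1..h}"
        using x(1) by (auto simp: h_def)
    qed
  qed
  then show ?thesis
    unfolding R_def h_def by (simp add: bij_betw_same_card[symmetric])
qed

lemma card_totatives_mult_filter:
  assumes "1 < m" "1 < n" "coprime m n"
  shows "card {x \<in> totatives (m * n). P (x mod m) \<and> Q (x mod n)}
    = card {a \<in> totatives m. P a} * card {b \<in> totatives n. Q b}"
proof -
  let ?f = "\<lambda>x. (x mod m, x mod n)"
  have bij: "bij_betw ?f (totatives (m * n)) (totatives m \<times> totatives n)"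
    using bij_betw_totatives[OF assms] .
  have image: "?f ` {x \<in> totatives (m * n). P (x mod m) \<and> Q (x mod n)}
      = {a \<in> totatives m. P a} \<times> {b \<in> totatives n. Q b}"
  proof safe
    fix x assume "x \<in> totatives (m * n)"
    then show "x mod m \<in> totatives m" "x mod n \<in> totatives n"
      using bij_betw_apply[OF bij] by auto
  next
    fix a b assume ab: "a \<in> totatives m" "P a" "b \<in> totatives n" "Q b"
    then have "(a, b) \<in> ?f ` totatives (m * n)"
      using bij_betw_imp_surj_on[OF bij] by simp
    then obtain x where "x \<in> totatives (m * n)" "?f x = (a, b)" by blast
    with ab show "(a, b) \<in> ?f ` {x \<in> totatives (m * n). P (x mod m) \<and> Q (x mod n)}"
      by (intro rev_image_eqI[of x]) auto
  qed
  have "bij_betw ?f {x \<in> totatives (m * n). P (x mod m) \<and> Q (x mod n)}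
      ({a \<in> totatives m. P a} \<times> {b \<in> totatives n. Q b})"
    by (rule bij_betw_subset[OF bij _ image]) auto
  then show ?thesis by (simp add: bij_betw_same_card card_cartesian_product)
qed

definition QR_totatives :: "nat list \<Rightarrow> nat set" where
  "QR_totatives ps = {x \<in> totatives (prod_list ps). \<forall>p\<in>set ps. Legendre (int x) (int p) = 1}"

lemma in_QR_totatives_iff:
  assumes "\<forall>p\<in>set ps. prime p"
  shows "x \<in> QR_totatives ps \<longleftrightarrow>
    0 < x \<and> x \<le> prod_list ps \<and> (\<forall>p\<in>set ps. Legendre (int x) (int p) = 1)"
proof -
  have "coprime x (prod_list ps)" if "\<forall>p\<in>set ps. Legendre (int x) (int p) = 1"
  proof (intro prod_list_coprime_right)
    fix p assume "p \<in> set ps"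
    then have "prime p" "\<not> p dvd x" using assms that by (auto simp: Legendre_eq_1_iff)
    then show "coprime x p" by (simp add: prime_imp_coprime coprime_commute)
  qed
  then show ?thesis unfolding QR_totatives_def in_totatives_iff by blast
qed

lemma card_QR_totatives:
  assumes "ps \<noteq> []" "distinct ps" "\<forall>p\<in>set ps. prime p \<and> 2 < p"
  shows "card (QR_totatives ps) = (\<Prod>p\<leftarrow>ps. (p - 1) div 2)"
  using assms
proof (induction ps rule: list_nonempty_induct)
  case (single p)
  then show ?case by (simp add: QR_totatives_def card_quadratic_residues)
next
  case (cons p ps)
  define D where "D = prod_list ps"
  have p: "prime p" "2 < p" using cons.prems by auto
  obtain q where "q \<in> set ps" using cons.hyps by (cases ps) auto
  then have "q dvd D" "2 < q" "D \<noteq> 0"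
    using cons.prems by (auto simp: D_def prod_list_dvd prod_list_zero_iff)
  then have "1 < D" using dvd_imp_le[of q D] by linarith
  have "coprime p D"
    unfolding D_def using cons.prems by (intro prod_list_coprime_right primes_coprime) auto
  have "QR_totatives (p # ps) = {x \<in> totatives (p * D).
      Legendre (int (x mod p)) (int p) = 1 \<and> (\<forall>q\<in>set ps. Legendre (int (x mod D)) (int q) = 1)}"
    by (auto simp: QR_totatives_def D_def Legendre_mod_dvd prod_list_dvd)
  then have "card (QR_totatives (p # ps))
      = card {a \<in> totatives p. Legendre (int a) (int p) = 1} * card (QR_totatives ps)"
    using card_totatives_mult_filter[OF _ \<open>1 < D\<close> \<open>coprime p D\<close>] p
    by (simp add: QR_totatives_def D_def)
  then show ?case using cons.IH cons.prems p by (simp add: card_quadratic_residues)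
qed

lemma half_pred_prod_eq_pow2_times_odd:
  assumes "\<forall>p\<in>set ps. p mod 8 = (5::nat)"
  obtains t where "odd t" "(\<Prod>p\<leftarrow>ps. (p - 1) div 2) = 2 ^ length ps * t"
proof -
  have "odd (\<Prod>p\<leftarrow>ps. (p - 1) div 4) \<and>
      (\<Prod>p\<leftarrow>ps. (p - 1) div 2) = 2 ^ length ps * (\<Prod>p\<leftarrow>ps. (p - 1) div 4)"
    using assms
  proof (induction ps)
    case (Cons p ps)
    then have "p mod 8 = 5" by simp
    then have "odd ((p - 1) div 4)" "(p - 1) div 2 = 2 * ((p - 1) div 4)" by presburger+
    with Cons show ?case by simp
  qed simp
  then show ?thesis using that by blast
qed

lemma card_eq_twice_card_odd_if_reflective:
  fixes S :: "nat set"
  assumes "odd D" "\<And>x. x \<in> S \<Longrightarrow> x < D \<and> D - x \<in> S"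
  shows "card S = 2 * card {x \<in> S. odd x}"
proof -
  have "finite S" using assms(2) by (meson finite_lessThan finite_subset lessThan_iff subsetI)
  have "{x \<in> S. even x} = (\<lambda>x. D - x) ` {x \<in> S. odd x}"
  proof safe
    fix x assume "x \<in> S" "even x"
    moreover from assms(2)[OF \<open>x \<in> S\<close>] have "x < D" "D - x \<in> S" by auto
    ultimately have "D - x \<in> S" "odd (D - x)" "x = D - (D - x)" using assms(1) by auto
    then show "x \<in> (\<lambda>x. D - x) ` {x \<in> S. odd x}" by blast
  qed (use assms in auto)
  moreover have "inj_on (\<lambda>x. D - x) {x \<in> S. odd x}"
    using assms(2) by (intro inj_onI) (metis diff_diff_cancel less_imp_le mem_Collect_eq)
  moreover have "card S = card {x \<in> S. odd x} + card {x \<in> S. even x}"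
    using \<open>finite S\<close> by (subst card_Un_disjoint[symmetric]) (auto intro: arg_cong[where f = card])
  ultimately show ?thesis by (simp add: card_image)
qed

lemma odd_prod_list_iff: "odd (prod_list xs) \<longleftrightarrow> (\<forall>x\<in>set xs. odd (x :: nat))"
  by (induction xs) auto

lemma QR_totatives_reflective:
  assumes "ps \<noteq> []" "\<forall>p\<in>set ps. prime p \<and> p mod 4 = 1" "x \<in> QR_totatives ps"
  shows "x < prod_list ps" "prod_list ps - x \<in> QR_totatives ps"
proof -
  define D where "D = prod_list ps"
  have primes: "\<forall>p\<in>set ps. prime p" using assms(2) by blast
  have x: "0 < x" "x \<le> D" "\<forall>p\<in>set ps. Legendre (int x) (int p) = 1"
    using assms(3) unfolding in_QR_totatives_iff[OF primes] D_def by auto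
  obtain p where "p \<in> set ps" using assms(1) by (cases ps) auto
  then have "p dvd D" "\<not> p dvd x" using x(3) by (auto simp: D_def prod_list_dvd Legendre_eq_1_iff)
  then have "x \<noteq> D" by auto
  then show "x < prod_list ps" using x(2) by (simp add: D_def)
  have "Legendre (int (D - x)) (int q) = 1" if "q \<in> set ps" for q
  proof -
    have q: "prime q" "q mod 4 = 1" using assms(2) that by auto
    then have "2 < q" using prime_gt_1_nat[of q] by presburger
    have "[int (D - x) = (-1) * int x] (mod int q)"
      using \<open>x < prod_list ps\<close> prod_list_dvd[OF that]
      by (simp add: D_def cong_iff_dvd_diff of_nat_diff)
    then have "Legendre (int (D - x)) (int q) = Legendre (-1) (int q) * Legendre (int x) (int q)"
      by (simp only: Legendre_cong Legendre_mult[OF q(1) \<open>2 < q\<close>])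
    then show ?thesis using Legendre_minus_one[OF q(1,2)] x(3) that by simp
  qed
  then show "prod_list ps - x \<in> QR_totatives ps"
    using \<open>x < prod_list ps\<close> unfolding in_QR_totatives_iff[OF primes] D_def by auto
qed

lemma odd_kronecker_ones_eq_QR_totatives:
  assumes "\<forall>p\<in>set ps. prime p \<and> p mod 4 = 1"
  shows "{a. 1 \<le> a \<and> a \<le> int (prod_list ps) \<and> (\<forall>p\<in>set ps. kronecker (int p) (nat a) = 1) \<and> odd a}
    = int ` {x \<in> QR_totatives ps. odd x}"
proof -
  have primes: "\<forall>p\<in>set ps. prime p" using assms by blast
  have "kronecker (int p) x = Legendre (int x) (int p)" if "p \<in> set ps" "odd x" for p x
    using assms that by (simp add: kronecker_eq_Legendre)
  then have QR: "x \<in> QR_totatives ps \<longleftrightarrow>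
      0 < x \<and> x \<le> prod_list ps \<and> (\<forall>p\<in>set ps. kronecker (int p) x = 1)" if "odd x" for x
    using that by (simp add: in_QR_totatives_iff[OF primes])
  show ?thesis
  proof (intro equalityI subsetI)
    fix a assume a: "a \<in> {a. 1 \<le> a \<and> a \<le> int (prod_list ps)
        \<and> (\<forall>p\<in>set ps. kronecker (int p) (nat a) = 1) \<and> odd a}"
    then have "odd (nat a)" by (simp add: even_nat_iff)
    with a have "nat a \<in> {x \<in> QR_totatives ps. odd x}" by (auto simp: QR)
    moreover have "a = int (nat a)" using a by simp
    ultimately show "a \<in> int ` {x \<in> QR_totatives ps. odd x}" by blast
  next
    fix a assume "a \<in> int ` {x \<in> QR_totatives ps. odd x}"
    then obtain x where "a = int x" "odd x" "x \<in> QR_totatives ps" by blast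
    then show "a \<in> {a. 1 \<le> a \<and> a \<le> int (prod_list ps)
        \<and> (\<forall>p\<in>set ps. kronecker (int p) (nat a) = 1) \<and> odd a}"
      by (auto simp: QR)
  qed
qed

lemma square_cong_mod_4:
  fixes a :: int
  shows "[a ^ 2 = (if odd a then 1 else 0)] (mod 4)"
proof (cases "odd a")
  case True
  then obtain k where "a = 2 * k + 1" by (elim oddE)
  then have "a ^ 2 - 1 = 4 * (k ^ 2 + k)" by (simp add: power2_eq_square algebra_simps)
  then show ?thesis using True by (simp add: cong_iff_dvd_diff)
next
  case False
  then have "even a" by simp
  then obtain k where "a = 2 * k" by (elim evenE)
  then show ?thesis using False by (simp add: cong_0_iff power2_eq_square)
qed

lemma sum_squares_cong_card_odd:
  fixes A :: "int set"
  assumes "finite A"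
  shows "[(\<Sum>a\<in>A. a ^ 2) = int (card {a \<in> A. odd a})] (mod 4)"
proof -
  have "[(\<Sum>a\<in>A. a ^ 2) = (\<Sum>a\<in>A. if odd a then 1 else 0)] (mod 4)"
    by (intro cong_sum square_cong_mod_4)
  also have "(\<Sum>a\<in>A. if odd a then 1 else 0) = int (card {a \<in> A. odd a})"
    using assms by (simp add: sum.If_cases Int_def)
  finally show ?thesis .
qed

theorem lemma3p7:
  fixes ps :: "nat list" and n :: nat and D :: nat
    and G :: "int set" and s1 :: int
  assumes "distinct ps"
    and "\<forall>p\<in>set ps. prime p \<and> p mod 8 = 5"
    and "n = length ps" and "n \<ge> 1"
    and "D = prod_list ps"
    and "G = {a::int. 1 \<le> a \<and> a \<le> int D \<and> (\<forall>p\<in>set ps. kronecker (int p) (nat a) = 1)}"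
    and "s1 = (\<Sum>a\<in>G. a ^ 2)"
  shows "(\<exists>t::int. odd t \<and> [s1 = 2 ^ (n - 1) * t] (mod 4)) \<and> (n \<ge> 3 \<longrightarrow> 4 dvd s1)"
proof -
  have "p mod 8 = 5 \<Longrightarrow> 2 < p \<and> p mod 4 = 1 \<and> odd p" for p :: nat by presburger
  then have ps: "ps \<noteq> []" "\<forall>p\<in>set ps. prime p \<and> 2 < p" "\<forall>p\<in>set ps. prime p \<and> p mod 4 = 1"
    "\<forall>p\<in>set ps. p mod 8 = (5::nat)" "odd (prod_list ps)"
    using assms(2-4) by (auto simp: odd_prod_list_iff)
  obtain t where "odd t" and card_QR: "card (QR_totatives ps) = 2 ^ n * t"
    using half_pred_prod_eq_pow2_times_odd[OF ps(4)] card_QR_totatives[OF ps(1) assms(1) ps(2)] assms(3)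
    by metis
  have "card (QR_totatives ps) = 2 * card {x \<in> QR_totatives ps. odd x}"
    using QR_totatives_reflective[OF ps(1,3)] ps(5)
    by (intro card_eq_twice_card_odd_if_reflective[of "prod_list ps"]) auto
  moreover have "{a \<in> G. odd a} = int ` {x \<in> QR_totatives ps. odd x}"
    unfolding assms(5,6) using odd_kronecker_ones_eq_QR_totatives[OF ps(3)] by (simp add: conj_assoc)
  ultimately have "card {a \<in> G. odd a} = 2 ^ (n - 1) * t"
    using card_QR assms(4) by (simp add: card_image power_eq_if)
  moreover have "finite G" unfolding assms(6) by (rule finite_subset[of _ "{1..int D}"]) auto
  ultimately have s1: "[s1 = 2 ^ (n - 1) * int t] (mod 4)"
    using sum_squares_cong_card_odd assms(7) by fastforce
  moreover have "4 dvd s1" if "3 \<le> n"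
  proof -
    have "4 dvd (2::int) ^ (n - 1)" using that le_imp_power_dvd[of 2 "n - 1" "2::int"] by simp
    then show ?thesis using cong_dvd_iff[OF s1] by simp
  qed
  moreover have "odd (int t)" using \<open>odd t\<close> by simp
  ultimately show ?thesis by blast
qed

end
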